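(* There exist absolute constants $C,c>0$ such that there exists a margin-$(c/\sqrt{k})$, relative-bias-$0$ embedding of $S_{n,k}$ in dimension $C k\log(n/k)$.
   Context: $S_{n,k}\in\{0,1\}^{\binom{n}{k}\times n}$ is the matrix whose rows are all the distinct vectors in $\{0,1\}^n$ with exactly $k$ ones, each appearing exactly once. For $A\in\{0,1\}^{N\times n}$ and $m\ge0$, unit vectors $U_1,\dots,U_N,V_1,\dots,V_n\in\mathbb{R}^d$ form a margin-$m$, relative-bias-$0$ embedding of $A$ in dimension $d$ if $\langle U_j,V_i\rangle\ge m$ whenever $A_{ji}=1$ and $\langle U_j,V_i\rangle\le -m$ whenever $A_{ji}=0$. *)

theory Defs
  imports Complex_Main
begin

text \<open>Vectors in R^d are represented as functions nat => real, of which only the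
  coordinates 0..<d are used.\<close>

definition ip :: "nat \<Rightarrow> (nat \<Rightarrow> real) \<Rightarrow> (nat \<Rightarrow> real) \<Rightarrow> real" where
  "ip d x y = (\<Sum>l<d. x l * y l)"

definition unit_vec :: "nat \<Rightarrow> (nat \<Rightarrow> real) \<Rightarrow> bool" where
  "unit_vec d x \<longleftrightarrow> ip d x x = 1"

text \<open>A 0/1 matrix with row index set R and columns 0..<n, given by its entries
  (True = 1, False = 0). Margin-m, relative-bias-0 embedding in dimension d.\<close>

definition margin_embedding ::
  "'r set \<Rightarrow> nat \<Rightarrow> ('r \<Rightarrow> nat \<Rightarrow> bool) \<Rightarrow> real \<Rightarrow> nat
     \<Rightarrow> ('r \<Rightarrow> nat \<Rightarrow> real) \<Rightarrow> (nat \<Rightarrow> nat \<Rightarrow> real) \<Rightarrow> bool" where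
  "margin_embedding R n A m d U V \<longleftrightarrow>
     (\<forall>j\<in>R. unit_vec d (U j)) \<and> (\<forall>i<n. unit_vec d (V i)) \<and>
     (\<forall>j\<in>R. \<forall>i<n. (A j i \<longrightarrow> ip d (U j) (V i) \<ge> m) \<and>
                     (\<not> A j i \<longrightarrow> ip d (U j) (V i) \<le> - m))"

text \<open>S_{n,k}: rows are all 0/1 vectors of length n with exactly k ones, each once.
  A row is identified with its support set J \<subseteq> {0..<n}, card J = k; entry (J,i) is 1 iff i \<in> J.\<close>

definition S_rows :: "nat \<Rightarrow> nat \<Rightarrow> nat set set" where
  "S_rows n k = {J. J \<subseteq> {..<n} \<and> card J = k}"

definition S_entry :: "nat set \<Rightarrow> nat \<Rightarrow> bool" where
  "S_entry J i \<longleftrightarrow> i \<in> J"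

end

(*
  Columns l < n get neighbourhoods N l of size D in a bipartite graph with D * M right vertices,
  D ~ log (n/k) and M ~ k, that is a lossless expander: every set S of at most 2k columns has
  at least (11/12) D |S| neighbours. Such graphs exist by a union bound over random graphs with
  one neighbour in each of D blocks of size M.

  For a row J (|J| = k), lossless expansion yields a separator R contained in N(J) that holds
  at least 3D/4 of the neighbours of each member of J and at most D/4 of those of each outsider.
  Peel alternately: keep only the outsiders with more than D/4 neighbours in the neighbourhood of
  the remaining members of J, then only the members of J with more than D/4 neighbours in the
  neighbourhood of those outsiders. By expansion each round quarters J, so k rounds exhaust it;
  R collects the neighbours of each round's members of J that avoid the next round's outsiders.

  The column vector is the indicator of N l and the row vector that of R, each with one extra
  coordinate, so that <U_J, V_l> is proportional to |N l \<inter> R| - D/2. After normalisation the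
  margin is at least (D/4) / (sqrt (2D) sqrt (Dk + D/4)) >= 1/(8 sqrt k), in dimension
  D M + 1 = O(k log (n/k)).
*)
theory Submission
  imports Defs "HOL-Analysis.Analysis"
begin

section \<open>Separating sets in lossless expanders\<close>

definition lossless_expander :: "'v set \<Rightarrow> ('v \<Rightarrow> 'a set) \<Rightarrow> nat \<Rightarrow> nat \<Rightarrow> bool" where
  "lossless_expander V N D K \<longleftrightarrow>
     (\<forall>v\<in>V. finite (N v) \<and> card (N v) = D) \<and>
     (\<forall>S\<subseteq>V. card S \<le> K \<longrightarrow> 11 * D * card S \<le> 12 * card (\<Union>(N ` S)))"

definition attached :: "('v \<Rightarrow> 'a set) \<Rightarrow> nat \<Rightarrow> 'v set \<Rightarrow> 'v \<Rightarrow> bool" where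
  "attached N D A v \<longleftrightarrow> D < 4 * card (N v \<inter> \<Union>(N ` A))"

lemma card_Union_image_le:
  assumes "finite S" "\<forall>v\<in>S. card (N v) = D"
  shows "card (\<Union>(N ` S)) \<le> D * card S"
  using card_UN_le[OF assms(1), of N] assms(2) by (simp add: mult.commute)

lemma card_Diff_Union_image:
  assumes "finite (N v)" "card (N v) = D"
  shows "card (N v - \<Union>(N ` A)) = D - card (N v \<inter> \<Union>(N ` A))"
  using assms by (simp add: card_Diff_subset_Int)

lemma card_Union_image_attached_le:
  assumes reg: "\<forall>v\<in>B. finite (N v) \<and> card (N v) = D" "\<forall>v\<in>A. card (N v) = D"
    and fin: "finite A" "finite B" and att: "\<forall>b\<in>B. attached N D A b"
  shows "4 * card (\<Union>(N ` (A \<union> B))) + card B \<le> 4 * D * card A + 3 * D * card B"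
proof -
  have "\<Union>(N ` (A \<union> B)) = \<Union>(N ` A) \<union> (\<Union>v\<in>B. N v - \<Union>(N ` A))" by blast
  hence "card (\<Union>(N ` (A \<union> B))) \<le> card (\<Union>(N ` A)) + card (\<Union>v\<in>B. N v - \<Union>(N ` A))"
    by (simp only: card_Un_le)
  also have "\<dots> \<le> card (\<Union>(N ` A)) + (\<Sum>v\<in>B. card (N v - \<Union>(N ` A)))"
    by (intro add_left_mono card_UN_le fin(2))
  finally have "card (\<Union>(N ` (A \<union> B))) \<le> card (\<Union>(N ` A)) + (\<Sum>v\<in>B. card (N v - \<Union>(N ` A)))" .
  moreover have "card (\<Union>(N ` A)) \<le> D * card A" using card_Union_image_le[OF fin(1)] reg(2) .
  moreover have "4 * card (N v - \<Union>(N ` A)) + 1 \<le> 3 * D" if "v \<in> B" for v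
  proof -
    have v: "finite (N v)" "card (N v) = D" "attached N D A v" using that reg(1) att by auto
    have "card (N v \<inter> \<Union>(N ` A)) \<le> D" using v card_mono[of "N v"] by (metis Int_lower1)
    thus ?thesis using v card_Diff_Union_image[of N v D A] unfolding attached_def by linarith
  qed
  hence "(\<Sum>v\<in>B. 4 * card (N v - \<Union>(N ` A)) + 1) \<le> (\<Sum>v\<in>B. 3 * D)"
    by (rule sum_mono)
  hence "4 * (\<Sum>v\<in>B. card (N v - \<Union>(N ` A))) + card B \<le> 3 * D * card B"
    unfolding sum.distrib sum_distrib_left[symmetric] by (simp add: mult_ac)
  ultimately show ?thesis by linarith
qed

text \<open>Expansion of \<open>A \<union> B'\<close> for a subset \<open>B'\<close> of half the size of \<open>A\<close> leaves too little room
  for the neighbourhoods of \<open>B'\<close> outside that of \<open>A\<close>.\<close>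

lemma card_attached_le_half:
  assumes G: "lossless_expander V N D (2 * k)" and "finite V"
    and A: "A \<subseteq> V" "card A \<le> k" and B: "B \<subseteq> V" "A \<inter> B = {}"
    and att: "\<forall>b\<in>B. attached N D A b"
  shows "2 * card B \<le> card A"
proof (rule ccontr)
  assume "\<not> 2 * card B \<le> card A"
  hence "card A div 2 + 1 \<le> card B" by linarith
  then obtain B' where B': "B' \<subseteq> B" "card B' = card A div 2 + 1"
    by (rule obtain_subset_with_card_n)
  define a where "a = card A"
  define b where "b = card B'"
  have fin: "finite A" "finite B'"
    using finite_subset[OF A(1) \<open>finite V\<close>] finite_subset[OF _ \<open>finite V\<close>, of B'] B(1) B'(1)
    by auto
  have reg: "\<forall>v\<in>V. finite (N v) \<and> card (N v) = D" using G unfolding lossless_expander_def by blast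
  have "B' \<noteq> {}" using B' by auto
  then obtain v where "v \<in> B" using B' by blast
  hence "D < 4 * card (N v \<inter> \<Union>(N ` A))" using att unfolding attached_def by blast
  hence "A \<noteq> {}" by (intro notI) simp
  hence "a \<ge> 1" using fin unfolding a_def by (simp add: Suc_le_eq card_gt_0_iff)
  hence "card (A \<union> B') \<le> 2 * k" using B' A fin card_Un_le[of A B'] unfolding a_def by linarith
  moreover have "A \<union> B' \<subseteq> V" using A B B' by blast
  ultimately have "11 * D * card (A \<union> B') \<le> 12 * card (\<Union>(N ` (A \<union> B')))"
    using G unfolding lossless_expander_def by blast
  moreover have "card (A \<union> B') = a + b"
    using card_Un_disjoint[OF fin] B B' unfolding a_def b_def by blast
  moreover have "4 * card (\<Union>(N ` (A \<union> B'))) + b \<le> 4 * D * a + 3 * D * b"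
  proof -
    have "\<forall>v\<in>B'. finite (N v) \<and> card (N v) = D" "\<forall>v\<in>A. card (N v) = D" "\<forall>v\<in>B'. attached N D A v"
      using reg att A(1) B(1) B'(1) by blast+
    from card_Union_image_attached_le[OF this(1,2) fin this(3)] show ?thesis
      unfolding a_def b_def .
  qed
  ultimately have "11 * (D * a) + 11 * (D * b) + 3 * b \<le> 12 * (D * a) + 9 * (D * b)"
    by (simp add: algebra_simps)
  moreover have "D * a + D \<le> 2 * (D * b)"
    using B' mult_le_mono2[of "a + 1" "2 * b" D] unfolding a_def b_def by (simp add: algebra_simps)
  ultimately show False using B'(2) unfolding b_def by linarith
qed

fun peel :: "('v \<Rightarrow> 'a set) \<Rightarrow> nat \<Rightarrow> 'v set \<Rightarrow> 'v set \<Rightarrow> nat \<Rightarrow> 'v set \<times> 'v set" where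
  "peel N D J L 0 = (J, L)"
| "peel N D J L (Suc t) =
     (let L' = {l \<in> snd (peel N D J L t). attached N D (fst (peel N D J L t)) l}
      in ({j \<in> fst (peel N D J L t). attached N D L' j}, L'))"

definition peel_in :: "('v \<Rightarrow> 'a set) \<Rightarrow> nat \<Rightarrow> 'v set \<Rightarrow> 'v set \<Rightarrow> nat \<Rightarrow> 'v set" where
  "peel_in N D J L t = fst (peel N D J L t)"

definition peel_out :: "('v \<Rightarrow> 'a set) \<Rightarrow> nat \<Rightarrow> 'v set \<Rightarrow> 'v set \<Rightarrow> nat \<Rightarrow> 'v set" where
  "peel_out N D J L t = snd (peel N D J L t)"

lemma peel_in_0 [simp]: "peel_in N D J L 0 = J"
  and peel_out_0 [simp]: "peel_out N D J L 0 = L"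
  by (simp_all add: peel_in_def peel_out_def)

lemma peel_out_Suc:
  "peel_out N D J L (Suc t) = {l \<in> peel_out N D J L t. attached N D (peel_in N D J L t) l}"
  by (simp add: peel_in_def peel_out_def Let_def)

lemma peel_in_Suc:
  "peel_in N D J L (Suc t) = {j \<in> peel_in N D J L t. attached N D (peel_out N D J L (Suc t)) j}"
  by (simp add: peel_in_def peel_out_def Let_def)

lemma decseq_peel_in: "decseq (peel_in N D J L)"
  unfolding decseq_Suc_iff peel_in_Suc by blast

lemma decseq_peel_out: "decseq (peel_out N D J L)"
  unfolding decseq_Suc_iff peel_out_Suc by blast

lemma peel_in_subset: "peel_in N D J L t \<subseteq> J"
  using decseqD[OF decseq_peel_in, of 0 t N D J L] by simp

lemma peel_out_subset: "peel_out N D J L t \<subseteq> L"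
  using decseqD[OF decseq_peel_out, of 0 t N D J L] by simp

lemma card_peel_in_le:
  assumes G: "lossless_expander V N D (2 * k)" and "finite V"
    and J: "J \<subseteq> V" "card J \<le> k" and L: "L \<subseteq> V - J"
  shows "card (peel_in N D J L t) * 4 ^ t \<le> card J"
proof (induction t)
  case 0
  show ?case by simp
next
  case (Suc t)
  let ?J = "peel_in N D J L t" and ?L = "peel_out N D J L (Suc t)"
  have "?J \<subseteq> J" "?L \<subseteq> L" by (rule peel_in_subset peel_out_subset)+
  hence sub: "?J \<subseteq> V" "?L \<subseteq> V" "?J \<inter> ?L = {}" using J L by auto
  have "card ?J \<le> k"
    using card_mono[OF finite_subset[OF J(1) \<open>finite V\<close>] \<open>?J \<subseteq> J\<close>] J(2) by linarith
  hence "2 * card ?L \<le> card ?J"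
    using card_attached_le_half[OF G \<open>finite V\<close> sub(1) _ sub(2,3)] unfolding peel_out_Suc
    by blast
  moreover have "2 * card (peel_in N D J L (Suc t)) \<le> card ?L"
  proof (rule card_attached_le_half[OF G \<open>finite V\<close> sub(2)])
    show "card ?L \<le> k" using calculation \<open>card ?J \<le> k\<close> by linarith
    show "peel_in N D J L (Suc t) \<subseteq> V" "?L \<inter> peel_in N D J L (Suc t) = {}"
      using sub unfolding peel_in_Suc by blast+
    show "\<forall>j\<in>peel_in N D J L (Suc t). attached N D ?L j"
      unfolding peel_in_Suc by blast
  qed
  ultimately have "card (peel_in N D J L (Suc t)) * 4 ^ Suc t \<le> card ?J * 4 ^ t" by simp
  thus ?case using Suc.IH by linarith
qed

lemma peel_in_eq_empty:
  assumes "lossless_expander V N D (2 * k)" "finite V" "J \<subseteq> V" "card J \<le> k" "L \<subseteq> V - J"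
  shows "peel_in N D J L k = {}"
proof -
  have "k < 4 ^ k" by (induction k) auto
  hence "card (peel_in N D J L k) * 4 ^ k < 1 * 4 ^ k"
    using card_peel_in_le[OF assms, of k] assms(4) by linarith
  hence "card (peel_in N D J L k) = 0" by simp
  moreover have "finite (peel_in N D J L k)"
    using finite_subset[OF peel_in_subset] finite_subset[OF assms(3,2)] by blast
  ultimately show ?thesis by simp
qed

definition separator :: "('v \<Rightarrow> 'a set) \<Rightarrow> nat \<Rightarrow> 'v set \<Rightarrow> 'v set \<Rightarrow> nat \<Rightarrow> 'a set" where
  "separator N D J L k =
     (\<Union>t<k. \<Union>(N ` peel_in N D J L t) - \<Union>(N ` peel_out N D J L (Suc t)))"

lemma separator_subset: "separator N D J L k \<subseteq> \<Union>(N ` J)"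
  unfolding separator_def by (intro UN_least order_trans[OF Diff_subset] UN_mono peel_in_subset order_refl)

text \<open>A member of \<open>J\<close> leaves in some round \<open>t < k\<close>; at most a quarter of its neighbours then
  meet those of \<open>peel_out (Suc t)\<close>, and the rest lie in the \<open>t\<close>-th part of the separator.\<close>

lemma card_separator_inside:
  assumes "lossless_expander V N D (2 * k)" "finite V" "J \<subseteq> V" "card J \<le> k" "L \<subseteq> V - J"
    and j: "j \<in> J"
  shows "3 * D \<le> 4 * card (N j \<inter> separator N D J L k)"
proof -
  let ?J = "peel_in N D J L" and ?L = "peel_out N D J L"
  have "j \<notin> ?J k" using peel_in_eq_empty[OF assms(1-5)] by simp
  then obtain t where t: "t < k" "j \<in> ?J t" "j \<notin> ?J (Suc t)"
    using ex_least_nat_less[of "\<lambda>t. j \<notin> ?J t" k] j by auto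
  have reg: "finite (N j)" "card (N j) = D"
    using assms(1,3) j unfolding lossless_expander_def by auto
  have "\<not> attached N D (?L (Suc t)) j" using t(2,3) unfolding peel_in_Suc by blast
  moreover have "N j - \<Union>(N ` ?L (Suc t)) \<subseteq> N j \<inter> separator N D J L k"
    unfolding separator_def using t by blast
  hence "card (N j - \<Union>(N ` ?L (Suc t))) \<le> card (N j \<inter> separator N D J L k)"
    using reg by (intro card_mono) auto
  ultimately show ?thesis
    using card_Diff_Union_image[of N j D "?L (Suc t)"] reg unfolding attached_def by linarith
qed

text \<open>An outsider \<open>l\<close> leaves in some round \<open>t \<le> k\<close>: it then has at most \<open>D/4\<close> neighbours
  in those of \<open>peel_in t\<close>, and it avoids the earlier parts of the separator because it was still
  in \<open>peel_out\<close> when they were formed.\<close>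

lemma card_separator_outside:
  assumes "lossless_expander V N D (2 * k)" "finite V" "J \<subseteq> V" "card J \<le> k" "L \<subseteq> V - J"
    and l: "l \<in> L"
  shows "4 * card (N l \<inter> separator N D J L k) \<le> D"
proof -
  let ?J = "peel_in N D J L" and ?L = "peel_out N D J L"
  have "?L (Suc k) = {}"
    unfolding peel_out_Suc peel_in_eq_empty[OF assms(1-5)] attached_def by simp
  then obtain t where t: "t < Suc k" "l \<in> ?L t" "l \<notin> ?L (Suc t)"
    using ex_least_nat_less[of "\<lambda>t. l \<notin> ?L t" "Suc k"] l by auto
  have "N l \<inter> separator N D J L k \<subseteq> N l \<inter> \<Union>(N ` ?J t)"
  proof
    fix x assume x: "x \<in> N l \<inter> separator N D J L k"
    then obtain s where s: "s < k" "x \<in> \<Union>(N ` ?J s)" "x \<notin> \<Union>(N ` ?L (Suc s))"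
      unfolding separator_def by blast
    have "\<not> s < t"
    proof
      assume "s < t"
      hence "l \<in> ?L (Suc s)" using decseqD[OF decseq_peel_out, of "Suc s" t N D J L] t(2) by auto
      thus False using s(3) x by blast
    qed
    thus "x \<in> N l \<inter> \<Union>(N ` ?J t)"
      using x s(2) decseqD[OF decseq_peel_in, of t s N D J L] by auto
  qed
  hence "card (N l \<inter> separator N D J L k) \<le> card (N l \<inter> \<Union>(N ` ?J t))"
    using assms(1,3,5) l unfolding lossless_expander_def by (intro card_mono) auto
  moreover have "\<not> attached N D (?J t) l" using t(2,3) unfolding peel_out_Suc by blast
  ultimately show ?thesis unfolding attached_def by linarith
qed

lemma lossless_expander_separator:
  assumes "lossless_expander V N D (2 * k)" "finite V" "J \<subseteq> V" "card J \<le> k"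
  obtains R where "R \<subseteq> \<Union>(N ` J)" "card R \<le> D * card J"
    "\<And>j. j \<in> J \<Longrightarrow> 3 * D \<le> 4 * card (N j \<inter> R)"
    "\<And>l. l \<in> V - J \<Longrightarrow> 4 * card (N l \<inter> R) \<le> D"
proof (rule that)
  show sub: "separator N D J (V - J) k \<subseteq> \<Union>(N ` J)" by (rule separator_subset)
  have "finite J" using assms(2,3) by (rule finite_subset[rotated])
  moreover have reg: "\<forall>v\<in>J. finite (N v) \<and> card (N v) = D"
    using assms(1,3) unfolding lossless_expander_def by blast
  ultimately have "card (separator N D J (V - J) k) \<le> card (\<Union>(N ` J))"
    by (intro card_mono[OF _ sub]) auto
  also have "\<dots> \<le> D * card J" using card_Union_image_le[OF \<open>finite J\<close>] reg by blast
  finally show "card (separator N D J (V - J) k) \<le> D * card J" .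
  show "3 * D \<le> 4 * card (N j \<inter> separator N D J (V - J) k)" if "j \<in> J" for j
    using card_separator_inside[OF assms order.refl that] .
  show "4 * card (N l \<inter> separator N D J (V - J) k) \<le> D" if "l \<in> V - J" for l
    using card_separator_outside[OF assms order.refl that] .
qed

section \<open>The embedding\<close>

definition set_vec :: "('a \<Rightarrow> nat) \<Rightarrow> 'a set \<Rightarrow> nat \<Rightarrow> real" where
  "set_vec e A q = (if q \<in> e ` A then 1 else 0)"

lemma ip_set_vec:
  assumes e: "inj_on e G" "e ` G \<subseteq> {..<m}" and "A \<subseteq> G" "B \<subseteq> G"
  shows "ip m (set_vec e A) (set_vec e B) = card (A \<inter> B)"
proof -
  have "e ` A \<inter> e ` B = e ` (A \<inter> B)"
    using inj_on_image_Int[OF e(1) assms(3,4)] by simp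
  hence "ip m (set_vec e A) (set_vec e B) = (\<Sum>q<m. if q \<in> e ` (A \<inter> B) then 1 else 0)"
    unfolding ip_def set_vec_def by (intro sum.cong) auto
  also have "\<dots> = card (e ` (A \<inter> B))"
  proof -
    have "e ` (A \<inter> B) \<subseteq> {..<m}" using e(2) assms(3) by blast
    thus ?thesis by (simp add: sum.If_cases Int_absorb1)
  qed
  also have "\<dots> = card (A \<inter> B)"
    using inj_on_subset[OF e(1)] assms(3) by (subst card_image) (auto intro: inj_on_subset)
  finally show ?thesis .
qed

lemma ip_Suc_upd: "ip (Suc m) (x(m := a)) (y(m := b)) = ip m x y + a * b"
proof -
  have "(\<Sum>q<m. (x(m := a)) q * (y(m := b)) q) = (\<Sum>q<m. x q * y q)" by (intro sum.cong) auto
  thus ?thesis by (simp add: ip_def)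
qed

lemma ip_divide: "ip m (\<lambda>q. x q / a) (\<lambda>q. y q / b) = ip m x y / (a * b)"
  unfolding ip_def by (simp add: sum_divide_distrib)

text \<open>The extra coordinate \<open>m\<close> shifts the threshold of the inner product to \<open>D/2\<close>.\<close>

definition col_vec :: "('a \<Rightarrow> nat) \<Rightarrow> nat \<Rightarrow> nat \<Rightarrow> 'a set \<Rightarrow> nat \<Rightarrow> real" where
  "col_vec e m D A = (\<lambda>q. set_vec e A q / sqrt (2 * real D))(m := 1 / sqrt 2)"

definition row_norm :: "nat \<Rightarrow> 'a set \<Rightarrow> real" where
  "row_norm D R = sqrt (card R + D / 4)"

definition row_vec :: "('a \<Rightarrow> nat) \<Rightarrow> nat \<Rightarrow> nat \<Rightarrow> 'a set \<Rightarrow> nat \<Rightarrow> real" where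
  "row_vec e m D R = (\<lambda>q. set_vec e R q / row_norm D R)(m := - sqrt D / (2 * row_norm D R))"

lemma quarter_margin_ge:
  assumes "card R \<le> D * k" "D > 0" "k \<ge> 1"
  shows "1 / (8 * sqrt k) \<le> (D / 4) / (sqrt (2 * real D) * row_norm D R)"
proof -
  have "(sqrt (2 * real D) * row_norm D R)\<^sup>2 = 2 * D * (card R + D / 4)"
    unfolding row_norm_def by (simp add: power_mult_distrib)
  also have "\<dots> \<le> 2 * D * (D * k + D / 4)"
    using assms(1) by (intro mult_left_mono) (simp_all flip: of_nat_mult)
  also have "\<dots> \<le> (2 * D * sqrt k)\<^sup>2"
  proof -
    have "(2 * D * sqrt k)\<^sup>2 - 2 * D * (D * k + D / 4) = (real D)\<^sup>2 * (2 * k - 1 / 2)"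
      by (simp add: power_mult_distrib power2_eq_square algebra_simps)
    moreover have "(real D)\<^sup>2 * (2 * k - 1 / 2) \<ge> 0" using assms(3) by simp
    ultimately show ?thesis by linarith
  qed
  finally have "sqrt (2 * real D) * row_norm D R \<le> 2 * D * sqrt k"
    by (rule power2_le_imp_le) simp
  moreover have "sqrt (2 * real D) * row_norm D R > 0" unfolding row_norm_def using assms by simp
  ultimately have "(D / 4) / (2 * D * sqrt k) \<le> (D / 4) / (sqrt (2 * real D) * row_norm D R)"
    by (intro divide_left_mono) (use assms in auto)
  thus ?thesis using assms by (simp add: field_simps)
qed

context
  fixes e :: "'a \<Rightarrow> nat" and G :: "'a set" and m D :: nat
  assumes e: "inj_on e G" "e ` G \<subseteq> {..<m}" and D: "D > 0"
begin

lemma unit_vec_col_vec: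
  assumes "A \<subseteq> G" "card A = D"
  shows "unit_vec (Suc m) (col_vec e m D A)"
proof -
  have "ip m (set_vec e A) (set_vec e A) = D" using ip_set_vec[OF e assms(1,1)] assms(2) by simp
  thus ?thesis
    unfolding unit_vec_def col_vec_def ip_Suc_upd ip_divide using D by (simp add: power2_eq_square)
qed

lemma unit_vec_row_vec:
  assumes "R \<subseteq> G"
  shows "unit_vec (Suc m) (row_vec e m D R)"
proof -
  have "ip m (set_vec e R) (set_vec e R) = card R" using ip_set_vec[OF e assms assms] by simp
  moreover have "row_norm D R > 0" unfolding row_norm_def using D by simp
  ultimately have "ip (Suc m) (row_vec e m D R) (row_vec e m D R) = (card R + D / 4) / (row_norm D R)\<^sup>2"
    unfolding row_vec_def ip_Suc_upd ip_divide by (simp add: field_simps power2_eq_square)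
  also have "\<dots> = 1" unfolding row_norm_def using D by simp
  finally show ?thesis unfolding unit_vec_def .
qed

lemma ip_row_col:
  assumes "R \<subseteq> G" "A \<subseteq> G"
  shows "ip (Suc m) (row_vec e m D R) (col_vec e m D A)
           = (card (A \<inter> R) - D / 2) / (sqrt (2 * real D) * row_norm D R)"
proof -
  have "ip m (set_vec e R) (set_vec e A) = card (A \<inter> R)"
    using ip_set_vec[OF e assms] by (simp add: Int_commute)
  moreover have "sqrt D / sqrt 2 = D / sqrt (2 * real D)"
    using D by (simp add: real_sqrt_mult field_simps)
  moreover have "row_norm D R > 0" unfolding row_norm_def using D by simp
  ultimately show ?thesis
    unfolding row_vec_def col_vec_def ip_Suc_upd ip_divide using D by (simp add: field_simps)
qed

lemma ip_row_col_ge_margin: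
  assumes "R \<subseteq> G" "A \<subseteq> G" "card R \<le> D * k" "k \<ge> 1" and "3 * D \<le> 4 * card (A \<inter> R)"
  shows "1 / (8 * sqrt k) \<le> ip (Suc m) (row_vec e m D R) (col_vec e m D A)"
proof -
  have "sqrt (2 * real D) * row_norm D R > 0" unfolding row_norm_def using D by simp
  moreover have "D / 4 \<le> card (A \<inter> R) - D / 2" using assms(5) by linarith
  ultimately have "(D / 4) / (sqrt (2 * real D) * row_norm D R)
                     \<le> (card (A \<inter> R) - D / 2) / (sqrt (2 * real D) * row_norm D R)"
    by (intro divide_right_mono) auto
  thus ?thesis
    unfolding ip_row_col[OF assms(1,2)] using quarter_margin_ge[OF assms(3) D assms(4)] by linarith
qed

lemma ip_row_col_le_neg_margin:
  assumes "R \<subseteq> G" "A \<subseteq> G" "card R \<le> D * k" "k \<ge> 1" and "4 * card (A \<inter> R) \<le> D"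
  shows "ip (Suc m) (row_vec e m D R) (col_vec e m D A) \<le> - (1 / (8 * sqrt k))"
proof -
  have "sqrt (2 * real D) * row_norm D R > 0" unfolding row_norm_def using D by simp
  moreover have "card (A \<inter> R) - D / 2 \<le> - (D / 4)" using assms(5) by linarith
  ultimately have "(card (A \<inter> R) - D / 2) / (sqrt (2 * real D) * row_norm D R)
                     \<le> - (D / 4) / (sqrt (2 * real D) * row_norm D R)"
    by (intro divide_right_mono) auto
  thus ?thesis
    unfolding ip_row_col[OF assms(1,2)] minus_divide_left[symmetric]
    using quarter_margin_ge[OF assms(3) D assms(4)] by linarith
qed

end

lemma margin_embedding_from_lossless_expander:
  fixes N :: "nat \<Rightarrow> 'a set"
  assumes X: "lossless_expander {..<n} N D (2 * k)"
    and G: "finite G" "\<forall>l<n. N l \<subseteq> G" and "D > 0" "k \<ge> 1"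
  shows "\<exists>U V. margin_embedding (S_rows n k) n S_entry (1 / (8 * sqrt k)) (Suc (card G)) U V"
proof -
  obtain e where "bij_betw e G {0..<card G}" using ex_bij_betw_finite_nat[OF G(1)] by blast
  hence e: "inj_on e G" "e ` G \<subseteq> {..<card G}" by (auto simp: bij_betw_def)
  have N: "N l \<subseteq> G" "card (N l) = D" if "l < n" for l
    using X G(2) that unfolding lossless_expander_def by auto
  have "\<forall>J\<in>S_rows n k. \<exists>R. R \<subseteq> G \<and> card R \<le> D * k \<and> (\<forall>j\<in>J. 3 * D \<le> 4 * card (N j \<inter> R)) \<and>
          (\<forall>l\<in>{..<n} - J. 4 * card (N l \<inter> R) \<le> D)" (is "\<forall>J\<in>_. \<exists>R. ?P J R")
  proof
    fix J assume "J \<in> S_rows n k"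
    hence J: "J \<subseteq> {..<n}" "card J = k" unfolding S_rows_def by auto
    hence "card J \<le> k" by simp
    with J(1) obtain R where "R \<subseteq> \<Union>(N ` J)" "card R \<le> D * card J"
      "\<And>j. j \<in> J \<Longrightarrow> 3 * D \<le> 4 * card (N j \<inter> R)"
      "\<And>l. l \<in> {..<n} - J \<Longrightarrow> 4 * card (N l \<inter> R) \<le> D"
      by (rule lossless_expander_separator[OF X finite_lessThan]) blast
    moreover have "\<Union>(N ` J) \<subseteq> G" using N J by blast
    ultimately show "\<exists>R. ?P J R" using J(2) by blast
  qed
  then obtain R where R: "\<forall>J\<in>S_rows n k. ?P J (R J)" by (rule bchoice[THEN exE])
  let ?U = "\<lambda>J. row_vec e (card G) D (R J)" and ?V = "\<lambda>l. col_vec e (card G) D (N l)"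
  have "unit_vec (Suc (card G)) (?U J) \<and>
        (\<forall>i<n. (S_entry J i \<longrightarrow> 1 / (8 * sqrt k) \<le> ip (Suc (card G)) (?U J) (?V i)) \<and>
               (\<not> S_entry J i \<longrightarrow> ip (Suc (card G)) (?U J) (?V i) \<le> - (1 / (8 * sqrt k))))"
    if "J \<in> S_rows n k" for J
  proof -
    have RJ: "R J \<subseteq> G" "card (R J) \<le> D * k" "\<forall>j\<in>J. 3 * D \<le> 4 * card (N j \<inter> R J)"
      "\<forall>l\<in>{..<n} - J. 4 * card (N l \<inter> R J) \<le> D"
      using R that by auto
    show ?thesis
      using unit_vec_row_vec[OF e \<open>D > 0\<close> RJ(1)]
        ip_row_col_ge_margin[OF e \<open>D > 0\<close> RJ(1) N(1) RJ(2) \<open>k \<ge> 1\<close>]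
        ip_row_col_le_neg_margin[OF e \<open>D > 0\<close> RJ(1) N(1) RJ(2) \<open>k \<ge> 1\<close>] RJ(3,4)
      unfolding S_entry_def by simp
  qed
  moreover have "unit_vec (Suc (card G)) (?V l)" if "l < n" for l
    using unit_vec_col_vec[OF e \<open>D > 0\<close> N[OF that]] .
  ultimately have "margin_embedding (S_rows n k) n S_entry (1 / (8 * sqrt k)) (Suc (card G)) ?U ?V"
    unfolding margin_embedding_def by blast
  thus ?thesis by blast
qed

section \<open>Existence of lossless expanders\<close>

lemma prod_le_mean_power:
  fixes x :: "'a \<Rightarrow> real"
  assumes "finite I" "\<And>i. i \<in> I \<Longrightarrow> 0 \<le> x i"
  shows "(\<Prod>i\<in>I. x i) \<le> ((\<Sum>i\<in>I. x i) / card I) ^ card I"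
proof (cases "I = {}")
  case False
  define P where "P = (\<Prod>i\<in>I. x i)"
  have "P \<ge> 0" unfolding P_def using assms(2) by (simp add: prod_nonneg)
  have c: "card I > 0" using False assms(1) by (simp add: card_gt_0_iff)
  have "P powr (1 / card I) \<le> (\<Sum>i\<in>I. x i) / card I"
    using arith_geom_mean[OF assms(1) False, of x] assms(2) unfolding P_def
    by (simp add: sum_divide_distrib)
  hence "(P powr (1 / card I)) ^ card I \<le> ((\<Sum>i\<in>I. x i) / card I) ^ card I"
    by (rule power_mono) simp
  moreover have "(P powr (1 / card I)) ^ card I = P"
  proof (cases "P = 0")
    case False
    thus ?thesis using c \<open>P \<ge> 0\<close> by (simp add: powr_power powr_powr)
  qed (use c in simp)
  ultimately show ?thesis unfolding P_def by simp
qed simp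

lemma pow_le_exp_mult_fact: "real t ^ t \<le> exp t * fact t"
proof -
  have "(\<lambda>n. real t ^ n /\<^sub>R fact n) sums exp (real t)" by (rule exp_converges)
  hence "real t ^ t / fact t \<le> exp (real t)"
    using sum_le_suminf[OF sums_summable, of _ _ "{t}"] sums_unique
    by (fastforce simp: divide_inverse mult.commute)
  thus ?thesis by (simp add: divide_le_eq mult.commute)
qed

lemma choose_mult_pow_le: "real (N choose t) * t ^ t \<le> (exp 1 * N) ^ t"
proof -
  have "real (N choose t) * t ^ t \<le> real (N choose t) * (exp 1 ^ t * fact t)"
    using pow_le_exp_mult_fact[of t] by (intro mult_left_mono) (simp_all flip: exp_of_nat_mult)
  also have "\<dots> = exp 1 ^ t * real ((N choose t) * fact t)" by simp
  also have "\<dots> \<le> exp 1 ^ t * N ^ t"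
    using binomial_fact_pow[of N t] by (intro mult_left_mono) (simp_all flip: of_nat_power of_nat_mult)
  finally show ?thesis by (simp add: power_mult_distrib)
qed

definition graph_nbr :: "(nat \<times> nat \<Rightarrow> nat) \<Rightarrow> nat \<Rightarrow> nat \<Rightarrow> (nat \<times> nat) set" where
  "graph_nbr h D l = (\<lambda>i. (i, h (l, i))) ` {..<D}"

lemma finite_graph_nbr [simp]: "finite (graph_nbr h D l)"
  unfolding graph_nbr_def by simp

lemma card_graph_nbr [simp]: "card (graph_nbr h D l) = D"
  unfolding graph_nbr_def by (subst card_image) (auto simp: inj_on_def)

lemma graph_nbr_subset_iff: "graph_nbr h D l \<subseteq> Y \<longleftrightarrow> (\<forall>i<D. (i, h (l, i)) \<in> Y)"
  unfolding graph_nbr_def by auto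

lemma graphs_with_nbrs_within_eq_PiE:
  assumes S: "S \<subseteq> {..<n}" and Y: "Y \<subseteq> {..<D} \<times> {..<M}"
  shows "{h \<in> {..<n} \<times> {..<D} \<rightarrow>\<^sub>E {..<M}. \<forall>l\<in>S. graph_nbr h D l \<subseteq> Y}
           = PiE ({..<n} \<times> {..<D}) (\<lambda>x. if fst x \<in> S then {y. (snd x, y) \<in> Y} else {..<M})"
    (is "?H = PiE _ ?B")
proof (intro set_eqI iffI)
  fix h assume "h \<in> ?H"
  thus "h \<in> PiE ({..<n} \<times> {..<D}) ?B" unfolding PiE_iff graph_nbr_subset_iff by auto
next
  fix h assume h: "h \<in> PiE ({..<n} \<times> {..<D}) ?B"
  hence B: "h (l, i) \<in> ?B (l, i)" if "l < n" "i < D" for l i using that unfolding PiE_iff by blast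
  have "h (l, i) \<in> {..<M}" if "l < n" "i < D" for l i
    using B[OF that] Y \<open>i < D\<close> by (auto split: if_splits)
  moreover have "graph_nbr h D l \<subseteq> Y" if "l \<in> S" for l
    unfolding graph_nbr_subset_iff
  proof (intro allI impI)
    fix i assume "i < D"
    have "l < n" using S that by blast
    from B[OF this \<open>i < D\<close>] show "(i, h (l, i)) \<in> Y" using that by simp
  qed
  ultimately show "h \<in> ?H" using h unfolding PiE_iff by auto
qed

lemma card_graphs_with_nbrs_within:
  fixes n D M :: nat
  assumes S: "S \<subseteq> {..<n}" and Y: "Y \<subseteq> {..<D} \<times> {..<M}"
  shows "real (card {h \<in> {..<n} \<times> {..<D} \<rightarrow>\<^sub>E {..<M}. \<forall>l\<in>S. graph_nbr h D l \<subseteq> Y})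
           \<le> (card Y / D) ^ (D * card S) * real M ^ (D * (n - card S))"
proof -
  define Yb where "Yb i = {y. (i, y) \<in> Y}" for i
  define B where "B = (\<lambda>x. if fst x \<in> S then Yb (snd x) else {..<M})"
  have "card {h \<in> {..<n} \<times> {..<D} \<rightarrow>\<^sub>E {..<M}. \<forall>l\<in>S. graph_nbr h D l \<subseteq> Y}
          = card (PiE ({..<n} \<times> {..<D}) B)"
    unfolding graphs_with_nbrs_within_eq_PiE[OF S Y] B_def Yb_def ..
  also have "\<dots> = (\<Prod>l<n. \<Prod>i<D. card (B (l, i)))"
    by (simp add: card_PiE prod.cartesian_product)
  also have "\<dots> = (\<Prod>l<n. if l \<in> S then \<Prod>i<D. card (Yb i) else M ^ D)"
    unfolding B_def by (intro prod.cong) auto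
  also have "\<dots> = (\<Prod>i<D. card (Yb i)) ^ card S * (M ^ D) ^ (n - card S)"
    using S by (simp add: prod.If_cases Int_absorb1 Diff_eq[symmetric] card_Diff_subset
        finite_subset[OF S])
  finally have card_eq: "card {h \<in> {..<n} \<times> {..<D} \<rightarrow>\<^sub>E {..<M}. \<forall>l\<in>S. graph_nbr h D l \<subseteq> Y}
      = (\<Prod>i<D. card (Yb i)) ^ card S * (M ^ D) ^ (n - card S)" .
  have Yb: "Yb i \<subseteq> {..<M}" if "i < D" for i using Y that unfolding Yb_def by auto
  have "Y = Sigma {..<D} Yb" using Y unfolding Yb_def by auto
  hence "card Y = (\<Sum>i<D. card (Yb i))" by (simp add: card_SigmaI finite_subset[OF Yb])
  hence "(\<Prod>i<D. real (card (Yb i))) \<le> (card Y / D) ^ D"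
    using prod_le_mean_power[of "{..<D}" "\<lambda>i. real (card (Yb i))"] by simp
  hence "(\<Prod>i<D. real (card (Yb i))) ^ card S * (real M ^ D) ^ (n - card S)
           \<le> ((card Y / D) ^ D) ^ card S * (real M ^ D) ^ (n - card S)"
    by (intro mult_right_mono power_mono) (simp_all add: prod_nonneg)
  thus ?thesis unfolding card_eq by (simp add: power_mult)
qed

lemma expansion_base_le_half:
  fixes n k a s :: nat
  assumes a: "1 \<le> a" and s: "1 \<le> s" "s \<le> 2 * k" and hyp: "exp 1 * n \<le> k * exp 1 ^ a"
  shows "exp 1 * n / s * exp 1 ^ (11 * a) * (s / (2 * 3 ^ 12 * k)) ^ a \<le> 1 / 2"
proof -
  define E :: real where "E = exp 1"
  define K :: real where "K = 2 * 3 ^ 12"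
  obtain b where b: "a = Suc b" using a by (cases a) auto
  have k: "1 \<le> k" using s by linarith
  have E: "0 < E" "E ^ 12 \<le> 3 ^ 12"
    unfolding E_def by (simp, rule power_mono[OF exp_le], simp)
  have "E * n / s * E ^ (11 * a) * (s / (K * k)) ^ a = E * n * E ^ (11 * a) * real s ^ b / (K * k) ^ a"
    using s b by (simp add: power_divide field_simps)
  also have "\<dots> \<le> (k * E ^ a) * E ^ (11 * a) * (2 * real k) ^ b / (K * k) ^ a"
  proof -
    have sb: "real s ^ b \<le> (2 * real k) ^ b" using s by (intro power_mono) simp_all
    have "E * n * E ^ (11 * a) \<le> (k * E ^ a) * E ^ (11 * a)"
      using hyp unfolding E_def by (rule mult_right_mono) simp
    from mult_mono[OF this sb] have "E * n * E ^ (11 * a) * real s ^ b \<le> (k * E ^ a) * E ^ (11 * a) * (2 * real k) ^ b"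
      using E(1) by simp
    thus ?thesis unfolding K_def by (intro divide_right_mono) simp_all
  qed
  also have "\<dots> = (2 * real k) ^ a * (E ^ 12) ^ a / (2 * (K * k) ^ a)"
  proof -
    have "E ^ a * E ^ (11 * a) = (E ^ 12) ^ a" by (simp flip: power_add power_mult)
    thus ?thesis using b k by (simp add: field_simps)
  qed
  also have "\<dots> = (2 * real k * E ^ 12 / (K * k)) ^ a / 2"
    by (simp add: power_mult_distrib power_divide)
  also have "\<dots> = (2 * E ^ 12 / K) ^ a / 2"
  proof -
    have "2 * real k * E ^ 12 / (K * k) = 2 * E ^ 12 / K" using k by simp
    thus ?thesis by simp
  qed
  also have "\<dots> \<le> 1 ^ a / 2"
    using E unfolding K_def by (intro divide_right_mono power_mono) simp_all
  finally show ?thesis unfolding E_def K_def by simp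
qed

text \<open>A summand of the union bound: the choices of \<open>s\<close> columns and of \<open>11 a s\<close> of the
  \<open>12 a M\<close> right vertices, times the probability that all \<open>12 a s\<close> neighbours of the columns
  fall among the chosen vertices.\<close>

lemma union_bound_ratio_le:
  fixes n k a s :: nat
  assumes a: "1 \<le> a" and s: "1 \<le> s" "s \<le> 2 * k" and hyp: "exp 1 * n \<le> k * exp 1 ^ a"
  defines "M \<equiv> 2 * 3 ^ 12 * k"
  shows "real (n choose s) * real ((12 * a * M) choose (11 * a * s))
           * (real (11 * a * s) / (12 * a * M)) ^ (12 * a * s) \<le> (1 / 2) ^ s"
proof -
  define E :: real where "E = exp 1"
  define N where "N = 12 * a * M"
  define t where "t = 11 * a * s"
  define q :: real where "q = t / N"
  have N: "real N > 0" unfolding N_def M_def using a s by simp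
  have "q = 11 / 12 * (s / M)" unfolding q_def t_def N_def using a by (simp add: field_simps)
  moreover have "0 \<le> s / M" by simp
  ultimately have q: "0 \<le> q" "q \<le> s / M" by linarith+
  have binom_N: "real (N choose t) * q ^ t \<le> E ^ t"
    using choose_mult_pow_le[of N t] N unfolding q_def E_def
    by (simp add: power_divide power_mult_distrib field_simps)
  have binom_n: "real (n choose s) \<le> (E * n / s) ^ s"
    using choose_mult_pow_le[of n s] s unfolding E_def
    by (simp add: power_divide field_simps)
  have "real (n choose s) * real (N choose t) * q ^ (12 * a * s)
          = real (n choose s) * (real (N choose t) * q ^ t) * q ^ (a * s)"
    unfolding t_def by (simp add: power_add[symmetric] algebra_simps)
  also have "\<dots> \<le> (E * n / s) ^ s * E ^ t * (s / M) ^ (a * s)"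
    using binom_n binom_N q by (intro mult_mono power_mono) (simp_all add: E_def)
  also have "\<dots> = (E * n / s * E ^ (11 * a) * (s / M) ^ a) ^ s"
    by (simp only: t_def power_mult power_mult_distrib)
  also have "\<dots> \<le> (1 / 2) ^ s"
    using expansion_base_le_half[OF a s hyp] unfolding E_def M_def
    by (intro power_mono) simp_all
  finally show ?thesis unfolding q_def t_def N_def by simp
qed

lemma union_bound_summand_le:
  fixes n k a s :: nat
  assumes a: "1 \<le> a" and s: "s \<in> {1..2 * k}" and hyp: "exp 1 * n \<le> k * exp 1 ^ a"
  defines "D \<equiv> 12 * a" and "M \<equiv> 2 * 3 ^ 12 * k"
  shows "real (n choose s) * real ((D * M) choose (11 * a * s))
           * ((real (11 * a * s) / D) ^ (D * s) * real M ^ (D * (n - s))) \<le> (1 / 2) ^ s * real M ^ (n * D)"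
proof (cases "s \<le> n")
  case True
  have "M > 0" unfolding M_def using s by simp
  have "real M ^ (n * D) = real M ^ (D * s) * real M ^ (D * (n - s))"
    using True by (simp flip: power_add add: algebra_simps)
  hence "(real (11 * a * s) / D) ^ (D * s) * real M ^ (D * (n - s))
           = (real (11 * a * s) / (D * M)) ^ (D * s) * real M ^ (n * D)"
    using \<open>M > 0\<close> by (simp add: power_divide power_mult_distrib)
  moreover have "real (n choose s) * real ((D * M) choose (11 * a * s))
                   * (real (11 * a * s) / (D * M)) ^ (D * s) \<le> (1 / 2) ^ s"
    using union_bound_ratio_le[OF a _ _ hyp, of s] s unfolding D_def M_def by (simp add: mult.assoc)
  ultimately show ?thesis
    by (simp add: mult.assoc[symmetric]) (intro mult_right_mono; simp)
qed (simp add: binomial_eq_0)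

lemma not_lossless_expanders_subset:
  fixes a M K :: nat
  assumes KM: "11 * K \<le> 12 * M"
  shows "{h \<in> {..<n} \<times> {..<12 * a} \<rightarrow>\<^sub>E {..<M}.
            \<not> lossless_expander {..<n} (graph_nbr h (12 * a)) (12 * a) K}
         \<subseteq> (\<Union>s\<in>{1..K}. \<Union>S\<in>{S. S \<subseteq> {..<n} \<and> card S = s}.
              \<Union>Y\<in>{Y. Y \<subseteq> {..<12 * a} \<times> {..<M} \<and> card Y = 11 * a * s}.
                {h \<in> {..<n} \<times> {..<12 * a} \<rightarrow>\<^sub>E {..<M}. \<forall>l\<in>S. graph_nbr h (12 * a) l \<subseteq> Y})"
    (is "?bad \<subseteq> ?cover")
proof
  fix h assume "h \<in> ?bad"
  hence h: "h \<in> {..<n} \<times> {..<12 * a} \<rightarrow>\<^sub>E {..<M}"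
    and "\<not> lossless_expander {..<n} (graph_nbr h (12 * a)) (12 * a) K" by auto
  then obtain S where S: "S \<subseteq> {..<n}" "card S \<le> K"
    and small: "12 * card (\<Union>(graph_nbr h (12 * a) ` S)) < 11 * (12 * a) * card S"
    unfolding lossless_expander_def by auto
  have "card S \<ge> 1" using small by (cases "card S") auto
  have "\<Union>(graph_nbr h (12 * a) ` S) \<subseteq> {..<12 * a} \<times> {..<M}"
    using h S(1) unfolding graph_nbr_def by auto
  moreover have "card (\<Union>(graph_nbr h (12 * a) ` S)) \<le> 11 * a * card S" using small by linarith
  moreover have "11 * a * card S \<le> card ({..<12 * a} \<times> {..<M})"
    using S(2) KM by (simp add: card_cartesian_product)
  ultimately obtain Y where Y: "\<Union>(graph_nbr h (12 * a) ` S) \<subseteq> Y" "Y \<subseteq> {..<12 * a} \<times> {..<M}"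
    "card Y = 11 * a * card S"
    using exists_subset_between[of _ _ "{..<12 * a} \<times> {..<M}"] by (metis finite_SigmaI finite_lessThan)
  hence "\<forall>l\<in>S. graph_nbr h (12 * a) l \<subseteq> Y" by blast
  moreover have "card S \<in> {1..K}" using S(2) \<open>card S \<ge> 1\<close> by simp
  ultimately show "h \<in> ?cover" using h S(1) Y(2,3) by blast
qed

lemma card_not_lossless_expanders_le:
  fixes n a M K :: nat
  assumes "11 * K \<le> 12 * M"
  shows "real (card {h \<in> {..<n} \<times> {..<12 * a} \<rightarrow>\<^sub>E {..<M}.
                  \<not> lossless_expander {..<n} (graph_nbr h (12 * a)) (12 * a) K})
    \<le> (\<Sum>s\<in>{1..K}. real (n choose s) * real ((12 * a * M) choose (11 * a * s))
                      * ((real (11 * a * s) / (12 * a)) ^ (12 * a * s) * real M ^ (12 * a * (n - s))))"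
proof -
  define D where "D = 12 * a"
  define H where "H = {..<n} \<times> {..<D} \<rightarrow>\<^sub>E {..<M}"
  define Bad where "Bad S Y = {h \<in> H. \<forall>l\<in>S. graph_nbr h D l \<subseteq> Y}" for S Y
  define SS where "SS s = {S. S \<subseteq> {..<n} \<and> card S = s}" for s
  define YY where "YY s = {Y. Y \<subseteq> {..<D} \<times> {..<M} \<and> card Y = 11 * a * s}" for s
  have fin_SS: "finite (SS s)" for s
    unfolding SS_def by (rule finite_subset[of _ "Pow {..<n}"]) auto
  have fin_YY: "finite (YY s)" for s
    unfolding YY_def by (rule finite_subset[of _ "Pow ({..<D} \<times> {..<M})"]) auto
  have fin_Bad: "finite (Bad S Y)" for S Y
    unfolding Bad_def H_def by (simp add: finite_PiE)
  have "{h \<in> H. \<not> lossless_expander {..<n} (graph_nbr h D) D K}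
          \<subseteq> (\<Union>s\<in>{1..K}. \<Union>S\<in>SS s. \<Union>Y\<in>YY s. Bad S Y)"
    unfolding H_def Bad_def SS_def YY_def D_def by (rule not_lossless_expanders_subset[OF assms])
  hence "card {h \<in> H. \<not> lossless_expander {..<n} (graph_nbr h D) D K}
          \<le> card (\<Union>s\<in>{1..K}. \<Union>S\<in>SS s. \<Union>Y\<in>YY s. Bad S Y)"
    by (rule card_mono[rotated]) (simp add: fin_SS fin_YY fin_Bad)
  also have "\<dots> \<le> (\<Sum>s\<in>{1..K}. card (\<Union>S\<in>SS s. \<Union>Y\<in>YY s. Bad S Y))"
    by (rule card_UN_le) simp
  also have "\<dots> \<le> (\<Sum>s\<in>{1..K}. \<Sum>S\<in>SS s. card (\<Union>Y\<in>YY s. Bad S Y))"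
    by (intro sum_mono card_UN_le fin_SS)
  also have "\<dots> \<le> (\<Sum>s\<in>{1..K}. \<Sum>S\<in>SS s. \<Sum>Y\<in>YY s. card (Bad S Y))"
    by (intro sum_mono card_UN_le fin_YY)
  finally have "real (card {h \<in> H. \<not> lossless_expander {..<n} (graph_nbr h D) D K})
           \<le> (\<Sum>s\<in>{1..K}. \<Sum>S\<in>SS s. \<Sum>Y\<in>YY s. real (card (Bad S Y)))"
    by (simp flip: of_nat_sum)
  also have "\<dots> \<le> (\<Sum>s\<in>{1..K}. \<Sum>S\<in>SS s. \<Sum>Y\<in>YY s.
                      (real (11 * a * s) / D) ^ (D * s) * real M ^ (D * (n - s)))"
  proof (intro sum_mono)
    fix s S Y assume "S \<in> SS s" "Y \<in> YY s"
    thus "real (card (Bad S Y)) \<le> (real (11 * a * s) / D) ^ (D * s) * real M ^ (D * (n - s))"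
      using card_graphs_with_nbrs_within[of S n Y D M] unfolding Bad_def H_def SS_def YY_def by simp
  qed
  also have "\<dots> = (\<Sum>s\<in>{1..K}. real (n choose s) * real ((D * M) choose (11 * a * s))
                      * ((real (11 * a * s) / D) ^ (D * s) * real M ^ (D * (n - s))))"
    unfolding SS_def YY_def by (simp add: n_subsets card_cartesian_product mult.assoc)
  finally show ?thesis unfolding H_def D_def by (simp add: mult.assoc)
qed

lemma sum_half_powers: "(\<Sum>s\<in>{1..m}. (1 / 2 :: real) ^ s) = 1 - (1 / 2) ^ m"
  by (induction m) (auto simp: atLeastAtMostSuc_conv)

lemma exists_lossless_expander:
  fixes n k a :: nat
  assumes a: "1 \<le> a" and k: "1 \<le> k" and hyp: "exp 1 * n \<le> k * exp 1 ^ a"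
  obtains h where "lossless_expander {..<n} (graph_nbr h (12 * a)) (12 * a) (2 * k)"
    "\<forall>l<n. graph_nbr h (12 * a) l \<subseteq> {..<12 * a} \<times> {..<2 * 3 ^ 12 * k}"
proof -
  define M where "M = 2 * 3 ^ 12 * k"
  define D where "D = 12 * a"
  define H where "H = {..<n} \<times> {..<D} \<rightarrow>\<^sub>E {..<M}"
  have "real (card {h \<in> H. \<not> lossless_expander {..<n} (graph_nbr h D) D (2 * k)})
          \<le> (\<Sum>s\<in>{1..2 * k}. real (n choose s) * real ((D * M) choose (11 * a * s))
                 * ((real (11 * a * s) / D) ^ (D * s) * real M ^ (D * (n - s))))"
    using card_not_lossless_expanders_le[of "2 * k" M n a] unfolding H_def D_def M_def by simp
  also have "\<dots> \<le> (\<Sum>s\<in>{1..2 * k}. (1 / 2) ^ s * real M ^ (n * D))"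
    unfolding D_def M_def by (rule sum_mono) (rule union_bound_summand_le[OF a _ hyp])
  also have "\<dots> = (1 - (1 / 2) ^ (2 * k)) * real M ^ (n * D)"
    by (simp only: sum_distrib_right[symmetric] sum_half_powers)
  also have "\<dots> < card H"
    using k unfolding H_def M_def by (simp add: card_PiE card_cartesian_product)
  finally have "{h \<in> H. \<not> lossless_expander {..<n} (graph_nbr h D) D (2 * k)} \<noteq> H" by auto
  then obtain h where "h \<in> H" "lossless_expander {..<n} (graph_nbr h D) D (2 * k)" by blast
  moreover have "\<forall>l<n. graph_nbr h D l \<subseteq> {..<D} \<times> {..<M}"
    using \<open>h \<in> H\<close> unfolding H_def graph_nbr_def by auto
  ultimately show ?thesis using that unfolding D_def M_def by blast
qed

section \<open>Choice of parameters\<close>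

lemma degree_parameter_bounds:
  fixes n k :: nat
  assumes k: "1 \<le> k" and n: "2 * k \<le> n"
  defines "a \<equiv> nat \<lceil>1 + ln (n / k)\<rceil>"
  shows "1 \<le> a" "exp 1 * n \<le> k * exp 1 ^ a"
    "real (Suc (12 * a * (2 * 3 ^ 12 * k))) \<le> (2 + 120 * 3 ^ 12) * real k * ln (real n / real k)"
proof -
  define L where "L = ln (n / k)"
  have "2 \<le> n / k" using k n by (simp add: field_simps)
  hence "ln 2 \<le> L" unfolding L_def by simp
  hence L: "2 / 3 \<le> L" using ln2_ge_two_thirds by linarith
  have a: "1 + L \<le> a" "a \<le> 2 + L" unfolding a_def L_def using L L_def by linarith+
  thus "1 \<le> a" using L by linarith
  have "exp 1 * (n / k) = exp (1 + L)"
    unfolding L_def using \<open>2 \<le> n / k\<close> by (simp add: exp_add)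
  also have "\<dots> \<le> exp 1 ^ a" using a by (simp flip: exp_of_nat_mult)
  finally show "exp 1 * n \<le> k * exp 1 ^ a" using k by (simp add: field_simps)
  have "L * 1 \<le> L * k" using k L by (intro mult_left_mono) simp_all
  hence Lk: "2 / 3 \<le> L * k" using L by linarith
  have "real a * k \<le> (4 * L) * k" using a L by (intro mult_right_mono) simp_all
  have "real (Suc (12 * a * (2 * 3 ^ 12 * k))) = 1 + 24 * 3 ^ 12 * (real a * k)" by simp
  also have "\<dots> \<le> (2 + 120 * 3 ^ 12) * (L * k)"
    using Lk \<open>real a * k \<le> (4 * L) * k\<close> by (simp; linarith)
  finally show "real (Suc (12 * a * (2 * 3 ^ 12 * k))) \<le> (2 + 120 * 3 ^ 12) * real k * ln (real n / real k)"
    unfolding L_def by (simp add: mult_ac)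
qed

theorem corollaryE1:
  shows "\<exists>C c::real. C > 0 \<and> c > 0 \<and>
    (\<forall>n k::nat. 1 \<le> k \<and> 2 * k \<le> n \<longrightarrow>
       (\<exists>d U V. real d \<le> C * real k * ln (real n / real k) \<and>
          margin_embedding (S_rows n k) n S_entry (c / sqrt (real k)) d U V))"
proof (rule exI[of _ "2 + 120 * 3 ^ 12"], rule exI[of _ "1 / 8"], intro conjI allI impI)
  fix n k :: nat
  assume "1 \<le> k \<and> 2 * k \<le> n"
  hence k: "1 \<le> k" and n: "2 * k \<le> n" by auto
  define a where "a = nat \<lceil>1 + ln (n / k)\<rceil>"
  define G where "G = {..<12 * a} \<times> {..<2 * 3 ^ 12 * k}"
  note a = degree_parameter_bounds[OF k n, folded a_def]
  obtain h where "lossless_expander {..<n} (graph_nbr h (12 * a)) (12 * a) (2 * k)"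
      "\<forall>l<n. graph_nbr h (12 * a) l \<subseteq> G"
    using exists_lossless_expander[OF a(1) k a(2)] unfolding G_def by blast
  moreover have "finite G" "0 < 12 * a" unfolding G_def using a(1) by auto
  ultimately obtain U V where "margin_embedding (S_rows n k) n S_entry (1 / (8 * sqrt k)) (Suc (card G)) U V"
    using margin_embedding_from_lossless_expander[OF _ _ _ _ k] by blast
  moreover have "real (Suc (card G)) \<le> (2 + 120 * 3 ^ 12) * real k * ln (real n / real k)"
    using a(3) unfolding G_def by (simp add: card_cartesian_product)
  ultimately have "real (Suc (card G)) \<le> (2 + 120 * 3 ^ 12) * real k * ln (real n / real k) \<and>
      margin_embedding (S_rows n k) n S_entry (1 / 8 / sqrt (real k)) (Suc (card G)) U V"
    by simp
  thus "\<exists>d U V. real d \<le> (2 + 120 * 3 ^ 12) * real k * ln (real n / real k) \<and>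
      margin_embedding (S_rows n k) n S_entry (1 / 8 / sqrt (real k)) d U V"
    by blast
qed simp_all

end
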